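(* Let $f(t)\in\mathbb{F}_q[t;\theta]$ be a right divisor of some monic $F(t)\in\mathbb{F}_q[t;\theta]$ of degree $n$, let $\mathscr{C}=\{w\in\mathbb{F}_q[t;\theta]:\deg w<n,\ w=a(t)f(t)\text{ for some }a\in\mathbb{F}_q[t;\theta]\}\subseteq\mathbb{F}_q^n$ be the linear code generated by $f$, and let $\mathscr{C}^{[]_s}=\{v\in\mathbb{F}_q[x]:\deg v<[n]_s,\ v=b(x)f^{[]_s}(x)\text{ for some }b\in\mathbb{F}_q[x]\}\subseteq\mathbb{F}_q^{[n]_s}$ be the linear code generated by $f^{[]_s}(x)$. Then $d(\mathscr{C}^{[]_s})\le d(\mathscr{C})$, and equality holds if and only if some codeword of minimal weight of $\mathscr{C}^{[]_s}$ belongs to $\mathbb{F}_q[x^{[]_s}]$.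
   Context: $q=p^r$ with $p$ prime, $\theta(a)=a^{p^s}$ for $a\in\mathbb{F}_q$ with $1\le s\le r-1$, and $\mathbb{F}_q[t;\theta]$ is the skew polynomial ring with $ta=\theta(a)t$. Polynomials of degree $<n$ are identified with their coefficient vectors in $\mathbb{F}_q^n$; the weight of a polynomial is its number of nonzero coefficients, and $d(\cdot)$ is the minimum Hamming distance (minimum nonzero weight). For $i\ge0$, $[i]_s=\frac{(p^s)^i-1}{p^s-1}$. For $f(t)=\sum_ia_it^i$, $f^{[]_s}(x)=\sum_ia_ix^{[i]_s}\in\mathbb{F}_q[x]$ (commutative polynomial ring), and $\mathbb{F}_q[x^{[]_s}]=\{\sum_i\alpha_ix^{[i]_s}\}\subseteq\mathbb{F}_q[x]$. *)

theory Defs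
  imports "HOL-Computational_Algebra.Polynomial"
begin

text \<open>Skew polynomials in F_q[t;theta] are represented by their coefficient
  sequences as values of type 'a poly; only the multiplication differs:
  (a t^i)(b t^j) = a theta^i(b) t^(i+j).\<close>

definition skew_mult :: "('a::comm_ring_1 \<Rightarrow> 'a) \<Rightarrow> 'a poly \<Rightarrow> 'a poly \<Rightarrow> 'a poly" where
  "skew_mult \<theta> f g =
     (\<Sum>i\<le>degree f. \<Sum>j\<le>degree g. monom (coeff f i * (\<theta> ^^ i) (coeff g j)) (i + j))"

text \<open>"deg w < n" (with deg 0 = -infinity): all coefficients from n on vanish.\<close>
definition deg_less :: "'a::zero poly \<Rightarrow> nat \<Rightarrow> bool" where
  "deg_less w n \<longleftrightarrow> (\<forall>i\<ge>n. coeff w i = 0)"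

text \<open>[i]_s = ((p^s)^i - 1)/(p^s - 1), with Q = p^s.\<close>
definition qbr :: "nat \<Rightarrow> nat \<Rightarrow> nat" where
  "qbr Q i = (Q ^ i - 1) div (Q - 1)"

definition lin_poly :: "nat \<Rightarrow> 'a::comm_ring_1 poly \<Rightarrow> 'a poly" where
  "lin_poly Q f = (\<Sum>i\<le>degree f. monom (coeff f i) (qbr Q i))"

definition lin_polys :: "nat \<Rightarrow> 'a::zero poly set" where
  "lin_polys Q = {v. \<forall>k. coeff v k \<noteq> 0 \<longrightarrow> (\<exists>i. k = qbr Q i)}"

definition skew_code :: "('a::comm_ring_1 \<Rightarrow> 'a) \<Rightarrow> 'a poly \<Rightarrow> nat \<Rightarrow> 'a poly set" where
  "skew_code \<theta> f n = {w. deg_less w n \<and> (\<exists>a. w = skew_mult \<theta> a f)}"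

definition lin_code :: "nat \<Rightarrow> 'a::comm_ring_1 poly \<Rightarrow> nat \<Rightarrow> 'a poly set" where
  "lin_code Q f n = {v. deg_less v (qbr Q n) \<and> (\<exists>b. v = b * lin_poly Q f)}"

definition weight :: "'a::zero poly \<Rightarrow> nat" where
  "weight w = card {i. coeff w i \<noteq> 0}"

definition min_dist :: "'a::zero poly set \<Rightarrow> nat" where
  "min_dist C = Min (weight ` (C - {0}))"

end

theory Submission
  imports "HOL-Number_Theory.Residues" Defs
begin

(* Residues comes first so that coeff and monom refer to the polynomial operations of Defs
   rather than to those of HOL-Algebra, which Residues pulls in. *)

text \<open>Let L be the linearisation f \<mapsto> f^[]_s (lin_poly) and Q = p^s. L is injective,
  additive and weight preserving, with image F_q[x^[]_s]. Because [i + j]_s = [i]_s + Q^i [j]_s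
  and x \<mapsto> x^Q is additive in characteristic p, L(a f) = \<Sum>_i a_i x^[i]_s L(f)^(Q^i) is a
  multiple of L(f); conversely, cancelling leading terms shows that every w with L(f) dividing
  L(w) is a left multiple of f. So L maps the code C onto C^[]_s \<inter> F_q[x^[]_s], a subcode of
  C^[]_s with the same minimum distance as C, and both claims hold for any subcode.\<close>

lemma qbr_eq_sum:
  assumes "Q \<ge> 2"
  shows "qbr Q i = (\<Sum>k<i. Q ^ k)"
proof -
  have "int (Q ^ i - 1) = int ((Q - 1) * (\<Sum>k<i. Q ^ k))"
    using assms power_diff_1_eq[of "int Q" i] by (simp add: of_nat_diff)
  then have "Q ^ i - 1 = (Q - 1) * (\<Sum>k<i. Q ^ k)"
    by (simp only: of_nat_eq_iff)
  with assms show ?thesis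
    by (simp add: qbr_def)
qed

lemma qbr_add:
  assumes "Q \<ge> 2"
  shows "qbr Q (i + j) = qbr Q i + Q ^ i * qbr Q j"
proof -
  have "(\<Sum>k<i + j. Q ^ k) = (\<Sum>k<i. Q ^ k) + Q ^ i * (\<Sum>k<j. Q ^ k)"
    by (induction j) (simp_all add: algebra_simps power_add)
  with assms show ?thesis
    by (simp add: qbr_eq_sum)
qed

lemma strict_mono_qbr:
  assumes "Q \<ge> 2"
  shows "strict_mono (qbr Q)"
  unfolding strict_mono_Suc_iff using assms by (simp add: qbr_eq_sum)

lemma qbr_less_iff: "Q \<ge> 2 \<Longrightarrow> qbr Q i < qbr Q j \<longleftrightarrow> i < j"
  using strict_mono_less strict_mono_qbr by blast

lemma qbr_le_iff: "Q \<ge> 2 \<Longrightarrow> qbr Q i \<le> qbr Q j \<longleftrightarrow> i \<le> j"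
  using strict_mono_less_eq strict_mono_qbr by blast

lemma qbr_eq_iff: "Q \<ge> 2 \<Longrightarrow> qbr Q i = qbr Q j \<longleftrightarrow> i = j"
  using strict_mono_eq strict_mono_qbr by blast

lemma coeff_lin_poly_qbr:
  assumes "Q \<ge> 2"
  shows "coeff (lin_poly Q f) (qbr Q j) = coeff f j"
  using assms by (simp add: lin_poly_def coeff_sum coeff_monom qbr_eq_iff coeff_eq_0)

lemma coeff_lin_poly_eq_0:
  "k \<notin> range (qbr Q) \<Longrightarrow> coeff (lin_poly Q f) k = 0"
  unfolding lin_poly_def coeff_sum coeff_monom by (intro sum.neutral) auto

lemma lin_poly_eqI:
  assumes "Q \<ge> 2"
    and "\<And>j. coeff g (qbr Q j) = coeff f j"
    and "\<And>k. k \<notin> range (qbr Q) \<Longrightarrow> coeff g k = 0"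
  shows "lin_poly Q f = g"
proof (rule poly_eqI)
  fix k
  show "coeff (lin_poly Q f) k = coeff g k"
    using assms coeff_lin_poly_qbr coeff_lin_poly_eq_0 by (cases "k \<in> range (qbr Q)") auto
qed

lemma lin_poly_add: "Q \<ge> 2 \<Longrightarrow> lin_poly Q (f + g) = lin_poly Q f + lin_poly Q g"
  by (rule lin_poly_eqI) (auto simp: coeff_lin_poly_qbr coeff_lin_poly_eq_0)

lemma lin_poly_diff: "Q \<ge> 2 \<Longrightarrow> lin_poly Q (f - g) = lin_poly Q f - lin_poly Q g"
  by (rule lin_poly_eqI) (auto simp: coeff_lin_poly_qbr coeff_lin_poly_eq_0)

lemma lin_poly_0 [simp]: "lin_poly Q 0 = 0"
  by (simp add: lin_poly_def)

lemma lin_poly_monom: "Q \<ge> 2 \<Longrightarrow> lin_poly Q (monom c m) = monom c (qbr Q m)"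
  by (rule lin_poly_eqI) (auto simp: coeff_monom qbr_eq_iff)

lemma lin_poly_sum: "Q \<ge> 2 \<Longrightarrow> lin_poly Q (\<Sum>x\<in>A. g x) = (\<Sum>x\<in>A. lin_poly Q (g x))"
  by (induction A rule: infinite_finite_induct) (auto simp: lin_poly_add)

lemma lin_poly_eq_iff: "Q \<ge> 2 \<Longrightarrow> lin_poly Q f = lin_poly Q g \<longleftrightarrow> f = g"
  by (metis coeff_lin_poly_qbr poly_eqI)

lemma lin_poly_eq_0_iff: "Q \<ge> 2 \<Longrightarrow> lin_poly Q f = 0 \<longleftrightarrow> f = 0"
  using lin_poly_eq_iff[of Q f 0] by simp

lemma lin_polys_eq_range:
  assumes "Q \<ge> 2"
  shows "lin_polys Q = range (lin_poly Q :: 'a::comm_ring_1 poly \<Rightarrow> _)"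
proof
  show "range (lin_poly Q :: 'a poly \<Rightarrow> _) \<subseteq> lin_polys Q"
    unfolding lin_polys_def using coeff_lin_poly_eq_0 by blast
next
  show "lin_polys Q \<subseteq> range (lin_poly Q :: 'a poly \<Rightarrow> _)"
  proof
    fix v :: "'a poly" assume v: "v \<in> lin_polys Q"
    define w where "w = (\<Sum>i\<le>degree v. monom (coeff v (qbr Q i)) i)"
    have "coeff w j = coeff v (qbr Q j)" for j
      using strict_mono_imp_increasing[OF strict_mono_qbr[OF assms], of j]
      by (auto simp: w_def coeff_sum coeff_monom coeff_eq_0)
    moreover have "coeff v k = 0" if "k \<notin> range (qbr Q)" for k
      using v that unfolding lin_polys_def by blast
    ultimately have "lin_poly Q w = v"
      by (intro lin_poly_eqI[OF assms]) simp_all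
    then show "v \<in> range (lin_poly Q :: 'a poly \<Rightarrow> _)"
      by blast
  qed
qed

lemma coeff_lin_poly_cases:
  assumes "Q \<ge> 2"
  obtains j where "k = qbr Q j" "coeff (lin_poly Q f) k = coeff f j"
  | "k \<notin> range (qbr Q)" "coeff (lin_poly Q f) k = 0"
proof (cases "k \<in> range (qbr Q)")
  case True
  then obtain j where "k = qbr Q j"
    by blast
  then show thesis
    by (intro that(1)[of j]) (simp_all add: coeff_lin_poly_qbr[OF assms])
next
  case False
  then show thesis
    by (intro that(2)) (simp_all add: coeff_lin_poly_eq_0)
qed

lemma weight_lin_poly:
  assumes "Q \<ge> 2"
  shows "weight (lin_poly Q f) = weight f"
proof -
  have "{k. coeff (lin_poly Q f) k \<noteq> 0} = qbr Q ` {i. coeff f i \<noteq> 0}"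
  proof (intro equalityI subsetI)
    fix k
    assume "k \<in> {k. coeff (lin_poly Q f) k \<noteq> 0}"
    then show "k \<in> qbr Q ` {i. coeff f i \<noteq> 0}"
      by (cases rule: coeff_lin_poly_cases[OF assms, of k f]) auto
  qed (auto simp: coeff_lin_poly_qbr[OF assms])
  moreover have "inj (qbr Q)"
    using strict_mono_qbr[OF assms] by (rule strict_mono_imp_inj_on)
  ultimately show ?thesis
    unfolding weight_def by (simp add: card_image inj_on_subset)
qed

lemma deg_less_lin_poly_iff:
  assumes "Q \<ge> 2"
  shows "deg_less (lin_poly Q f) (qbr Q n) \<longleftrightarrow> deg_less f n"
  unfolding deg_less_def
proof (intro iffI allI impI)
  fix i
  assume "\<forall>k\<ge>qbr Q n. coeff (lin_poly Q f) k = 0" and "n \<le> i"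
  then show "coeff f i = 0"
    using assms by (auto simp: coeff_lin_poly_qbr qbr_le_iff dest: spec[of _ "qbr Q i"])
next
  fix k
  assume "\<forall>i\<ge>n. coeff f i = 0" and "qbr Q n \<le> k"
  then show "coeff (lin_poly Q f) k = 0"
    by (cases rule: coeff_lin_poly_cases[OF assms, of k f]) (auto simp: qbr_le_iff[OF assms])
qed

lemma degree_lin_poly:
  assumes "Q \<ge> 2"
  shows "degree (lin_poly Q f) = qbr Q (degree f)"
proof (cases "f = 0")
  case True
  then show ?thesis
    by (simp add: qbr_def)
next
  case False
  have "degree (lin_poly Q f) \<le> qbr Q (degree f)"
  proof (rule degree_le, intro allI impI)
    fix k
    assume "qbr Q (degree f) < k"
    then show "coeff (lin_poly Q f) k = 0"
      by (cases rule: coeff_lin_poly_cases[OF assms, of k f])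
        (auto simp: qbr_less_iff[OF assms] coeff_eq_0)
  qed
  moreover have "qbr Q (degree f) \<le> degree (lin_poly Q f)"
    using assms False by (intro le_degree) (simp add: coeff_lin_poly_qbr)
  ultimately show ?thesis
    by simp
qed

lemma funpow_power_eq: "((\<lambda>x. x ^ Q) ^^ i) (x :: 'a::monoid_mult) = x ^ (Q ^ i)"
  by (induction i) (simp_all add: power_mult[symmetric] mult.commute)

lemma skew_mult_power_eq_sum:
  fixes a f :: "'a::comm_ring_1 poly"
  assumes "Q > 0" and "degree a \<le> N" and "degree f \<le> M"
  shows "skew_mult (\<lambda>x. x ^ Q) a f =
    (\<Sum>i\<le>N. \<Sum>j\<le>M. monom (coeff a i * coeff f j ^ (Q ^ i)) (i + j))"
proof -
  have "(\<Sum>j\<le>M. monom (coeff a i * coeff f j ^ (Q ^ i)) (i + j)) =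
      (\<Sum>j\<le>degree f. monom (coeff a i * coeff f j ^ (Q ^ i)) (i + j))" for i
    by (rule sum.mono_neutral_right) (use assms in \<open>auto simp: coeff_eq_0 power_0_left\<close>)
  moreover have "(\<Sum>i\<le>N. \<Sum>j\<le>degree f. monom (coeff a i * coeff f j ^ (Q ^ i)) (i + j)) =
      (\<Sum>i\<le>degree a. \<Sum>j\<le>degree f. monom (coeff a i * coeff f j ^ (Q ^ i)) (i + j))"
    by (rule sum.mono_neutral_right) (use assms in \<open>auto simp: coeff_eq_0\<close>)
  ultimately show ?thesis
    unfolding skew_mult_def funpow_power_eq by simp
qed

lemma skew_mult_0_left [simp]: "skew_mult \<theta> 0 f = 0"
  by (simp add: skew_mult_def)

lemma skew_mult_power_add_left:
  fixes a b f :: "'a::comm_ring_1 poly"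
  assumes "Q > 0"
  shows "skew_mult (\<lambda>x. x ^ Q) (a + b) f = skew_mult (\<lambda>x. x ^ Q) a f + skew_mult (\<lambda>x. x ^ Q) b f"
proof -
  let ?N = "max (degree a) (degree b)"
  have "degree (a + b) \<le> ?N"
    by (rule degree_add_le) auto
  then show ?thesis
    using assms by (simp add: skew_mult_power_eq_sum[where N = ?N and M = "degree f"]
        distrib_right add_monom[symmetric] sum.distrib)
qed

lemma coeff_skew_mult_power_monom:
  fixes f :: "'a::comm_ring_1 poly"
  assumes "Q > 0"
  shows "coeff (skew_mult (\<lambda>x. x ^ Q) (monom c k) f) m =
    (if k \<le> m then c * coeff f (m - k) ^ (Q ^ k) else 0)"
proof -
  have "skew_mult (\<lambda>x. x ^ Q) (monom c k) f =
      (\<Sum>i\<le>k. \<Sum>j\<le>degree f. monom (coeff (monom c k) i * coeff f j ^ (Q ^ i)) (i + j))"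
    by (rule skew_mult_power_eq_sum[OF assms degree_monom_le order_refl])
  also have "\<dots> = (\<Sum>i\<in>{k}. \<Sum>j\<le>degree f. monom (coeff (monom c k) i * coeff f j ^ (Q ^ i)) (i + j))"
    by (rule sum.mono_neutral_right) auto
  also have "\<dots> = (\<Sum>j\<le>degree f. monom (c * coeff f j ^ (Q ^ k)) (k + j))"
    by simp
  finally have "coeff (skew_mult (\<lambda>x. x ^ Q) (monom c k) f) m =
      (\<Sum>j\<le>degree f. if j + k = m then c * coeff f j ^ (Q ^ k) else 0)"
    by (simp add: coeff_sum coeff_monom add.commute)
  also have "\<dots> = (\<Sum>j\<le>degree f. if k \<le> m \<and> j = m - k then c * coeff f j ^ (Q ^ k) else 0)"
    by (intro sum.cong) auto
  finally show ?thesis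
    using assms by (auto simp: sum.delta coeff_eq_0 power_0_left)
qed

lemma lin_poly_Frobenius_power:
  fixes f :: "'a::comm_ring_1 poly"
  assumes "Q \<ge> 2" and "prime CHAR('a)" and "Q = CHAR('a) ^ s"
  shows "lin_poly Q f ^ (Q ^ i) = (\<Sum>j\<le>degree f. monom (coeff f j ^ (Q ^ i)) (Q ^ i * qbr Q j))"
proof -
  have "lin_poly Q f ^ (Q ^ i) = (\<Sum>j\<le>degree f. monom (coeff f j) (qbr Q j) ^ (Q ^ i))"
    unfolding lin_poly_def
    by (rule freshmans_dream_sum') (simp_all add: assms power_mult[symmetric])
  then show ?thesis
    by (simp add: monom_power mult.commute)
qed

lemma lin_poly_skew_mult:
  fixes a f :: "'a::comm_ring_1 poly"
  assumes "Q \<ge> 2" and "prime CHAR('a)" and "Q = CHAR('a) ^ s"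
  shows "lin_poly Q (skew_mult (\<lambda>x. x ^ Q) a f) =
    (\<Sum>i\<le>degree a. monom (coeff a i) (qbr Q i) * lin_poly Q f ^ (Q ^ i))"
proof -
  have "lin_poly Q (skew_mult (\<lambda>x. x ^ Q) a f) =
      (\<Sum>i\<le>degree a. \<Sum>j\<le>degree f. monom (coeff a i * coeff f j ^ (Q ^ i)) (qbr Q (i + j)))"
    using assms(1) skew_mult_power_eq_sum[of Q a "degree a" f "degree f"]
    by (simp add: lin_poly_sum lin_poly_monom)
  also have "\<dots> = (\<Sum>i\<le>degree a. monom (coeff a i) (qbr Q i) * lin_poly Q f ^ (Q ^ i))"
    by (simp add: lin_poly_Frobenius_power[OF assms] sum_distrib_left mult_monom qbr_add[OF assms(1)])
  finally show ?thesis .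
qed

lemma lin_poly_dvd_lin_poly_skew_mult:
  fixes a f :: "'a::comm_ring_1 poly"
  assumes "Q \<ge> 2" and "prime CHAR('a)" and "Q = CHAR('a) ^ s"
  shows "lin_poly Q f dvd lin_poly Q (skew_mult (\<lambda>x. x ^ Q) a f)"
  unfolding lin_poly_skew_mult[OF assms] using assms(1) by (intro dvd_sum dvd_mult) simp

lemma deg_less_iff: "deg_less w n \<longleftrightarrow> w = 0 \<or> degree w < n"
proof
  assume less: "deg_less w n"
  show "w = 0 \<or> degree w < n"
  proof (cases "w = 0")
    case False
    then have "coeff w (degree w) \<noteq> 0"
      by simp
    with less have "degree w < n"
      unfolding deg_less_def using not_le by blast
    then show ?thesis ..
  qed simp
qed (auto simp: deg_less_def coeff_eq_0)

lemma skew_mult_power_monom_cancel_lead: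
  fixes f w :: "'a::field poly"
  assumes "Q > 0" and "f \<noteq> 0" and "degree f \<le> N" and "deg_less w (Suc N)"
  defines "k \<equiv> N - degree f"
  shows "deg_less (w - skew_mult (\<lambda>x. x ^ Q) (monom (coeff w N / lead_coeff f ^ (Q ^ k)) k) f) N"
  unfolding deg_less_def
proof (intro allI impI)
  fix m
  assume "N \<le> m"
  then consider "m = N" | "N < m" "coeff w m = 0" "degree f < m - k"
    using assms(3,4) by (force simp: deg_less_def k_def)
  then show "coeff (w - skew_mult (\<lambda>x. x ^ Q) (monom (coeff w N / lead_coeff f ^ (Q ^ k)) k) f) m = 0"
  proof cases
    case 1
    moreover have "N - k = degree f"
      using assms(3) by (simp add: k_def)
    ultimately show ?thesis
      using assms(1,2) by (simp add: coeff_skew_mult_power_monom k_def)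
  next
    case 2
    then show ?thesis
      using assms(1) by (simp add: coeff_skew_mult_power_monom coeff_eq_0 power_0_left)
  qed
qed

lemma skew_right_dvd_if_lin_poly_dvd:
  fixes f w :: "'a::field poly"
  assumes Q: "Q \<ge> 2" and CHAR: "prime CHAR('a)" "Q = CHAR('a) ^ s"
    and "deg_less w N" and "lin_poly Q f dvd lin_poly Q w"
  shows "\<exists>a. w = skew_mult (\<lambda>x. x ^ Q) a f"
  using assms(4,5)
proof (induction N arbitrary: w)
  case 0
  then have "w = 0"
    by (simp add: deg_less_iff)
  then show ?case
    by (intro exI[of _ 0]) simp
next
  case (Suc N)
  show ?case
  proof (cases "w = 0")
    case True
    then show ?thesis
      by (intro exI[of _ 0]) simp
  next
    case False
    then have "f \<noteq> 0"
      using Suc.prems(2) Q by (auto simp: lin_poly_eq_0_iff)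
    moreover have "degree (lin_poly Q f) \<le> degree (lin_poly Q w)"
      using Suc.prems(2) False Q by (intro dvd_imp_degree_le) (auto simp: lin_poly_eq_0_iff)
    then have "degree f \<le> N"
      using Suc.prems(1) False Q by (simp add: deg_less_iff degree_lin_poly qbr_le_iff)
    ultimately have "deg_less (w - skew_mult (\<lambda>x. x ^ Q)
        (monom (coeff w N / lead_coeff f ^ (Q ^ (N - degree f))) (N - degree f)) f) N"
      using Q Suc.prems(1) by (intro skew_mult_power_monom_cancel_lead) simp_all
    then obtain c k where "deg_less (w - skew_mult (\<lambda>x. x ^ Q) (monom c k) f) N"
      by blast
    moreover have "lin_poly Q f dvd lin_poly Q (w - skew_mult (\<lambda>x. x ^ Q) (monom c k) f)"
      unfolding lin_poly_diff[OF Q]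
      by (intro dvd_diff Suc.prems(2) lin_poly_dvd_lin_poly_skew_mult[OF Q CHAR])
    ultimately obtain a where "w - skew_mult (\<lambda>x. x ^ Q) (monom c k) f = skew_mult (\<lambda>x. x ^ Q) a f"
      using Suc.IH by blast
    then have "w = skew_mult (\<lambda>x. x ^ Q) (a + monom c k) f"
      using Q by (simp add: skew_mult_power_add_left algebra_simps)
    then show ?thesis ..
  qed
qed

lemma lin_poly_image_skew_code:
  fixes f :: "'a::field poly"
  assumes Q: "Q \<ge> 2" and CHAR: "prime CHAR('a)" "Q = CHAR('a) ^ s"
  shows "lin_poly Q ` skew_code (\<lambda>x. x ^ Q) f n = lin_code Q f n \<inter> lin_polys Q"
proof (intro equalityI subsetI)
  fix v
  assume "v \<in> lin_poly Q ` skew_code (\<lambda>x. x ^ Q) f n"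
  then obtain a w where w: "v = lin_poly Q w" "deg_less w n" "w = skew_mult (\<lambda>x. x ^ Q) a f"
    unfolding skew_code_def by blast
  then obtain b where "lin_poly Q w = lin_poly Q f * b"
    using lin_poly_dvd_lin_poly_skew_mult[OF Q CHAR] by blast
  moreover have "deg_less v (qbr Q n)"
    using w Q by (simp add: deg_less_lin_poly_iff)
  ultimately have "v \<in> lin_code Q f n"
    using w(1) by (auto simp: lin_code_def mult.commute)
  moreover have "v \<in> lin_polys Q"
    using w(1) Q by (simp add: lin_polys_eq_range)
  ultimately show "v \<in> lin_code Q f n \<inter> lin_polys Q" ..
next
  fix v
  assume v: "v \<in> lin_code Q f n \<inter> lin_polys Q"
  then obtain w where w: "v = lin_poly Q w"
    using Q by (auto simp: lin_polys_eq_range)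
  with v Q have "deg_less w n" "lin_poly Q f dvd lin_poly Q w"
    by (auto simp: lin_code_def deg_less_lin_poly_iff)
  with w show "v \<in> lin_poly Q ` skew_code (\<lambda>x. x ^ Q) f n"
    using skew_right_dvd_if_lin_poly_dvd[OF Q CHAR] by (auto simp: skew_code_def)
qed

lemma min_dist_lin_poly_image:
  assumes "Q \<ge> 2"
  shows "min_dist (lin_poly Q ` C) = min_dist C"
proof -
  have "lin_poly Q ` C - {0} = lin_poly Q ` (C - {0})"
    using assms by (auto simp: lin_poly_eq_0_iff)
  then have "weight ` (lin_poly Q ` C - {0}) = weight ` (C - {0})"
    using assms by (simp add: image_image weight_lin_poly)
  then show ?thesis
    by (simp add: min_dist_def)
qed

lemma weight_le_of_deg_less:
  assumes "deg_less w n"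
  shows "weight w \<le> n"
proof -
  have "{i. coeff w i \<noteq> 0} \<subseteq> {..<n}"
    using assms by (auto simp: deg_less_def not_less[symmetric])
  then have "card {i. coeff w i \<noteq> 0} \<le> card {..<n}"
    by (intro card_mono) auto
  then show ?thesis
    by (simp add: weight_def)
qed

lemma finite_weight_image_of_deg_less:
  assumes "\<And>v. v \<in> C \<Longrightarrow> deg_less v n"
  shows "finite (weight ` C)"
proof (rule finite_subset)
  show "weight ` C \<subseteq> {..n}"
    using assms weight_le_of_deg_less by auto
qed simp

lemma min_dist_subcode:
  assumes "A \<subseteq> B" and "finite (weight ` (B - {0}))" and "A - {0} \<noteq> {}"
  shows "min_dist B \<le> min_dist A \<and>
    (min_dist B = min_dist A \<longleftrightarrow> (\<exists>v\<in>B. v \<noteq> 0 \<and> weight v = min_dist B \<and> v \<in> A))"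
proof -
  have finite_A: "finite (weight ` (A - {0}))"
    using assms(1) by (intro finite_subset[OF _ assms(2)]) auto
  have "min_dist A \<in> weight ` (A - {0})"
    unfolding min_dist_def using finite_A assms(3) by (intro Min_in) auto
  then obtain v where v: "v \<in> A - {0}" "min_dist A = weight v"
    by (rule imageE)
  have le_B: "min_dist B \<le> weight u" if "u \<in> B - {0}" for u
    unfolding min_dist_def using assms(2) that by (intro Min_le) auto
  have le_A: "min_dist A \<le> weight u" if "u \<in> A - {0}" for u
    unfolding min_dist_def using finite_A that by (intro Min_le) auto
  have "v \<in> B - {0}"
    using v(1) assms(1) by auto
  then have le: "min_dist B \<le> min_dist A"
    using le_B v(2) by simp
  show ?thesis
  proof (intro conjI iffI le)
    assume "min_dist B = min_dist A"
    with v \<open>v \<in> B - {0}\<close> show "\<exists>v\<in>B. v \<noteq> 0 \<and> weight v = min_dist B \<and> v \<in> A"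
      by auto
  next
    assume "\<exists>v\<in>B. v \<noteq> 0 \<and> weight v = min_dist B \<and> v \<in> A"
    then obtain u where "u \<in> A - {0}" "weight u = min_dist B"
      by auto
    with le le_A show "min_dist B = min_dist A"
      by fastforce
  qed
qed

lemma CHAR_eq_of_card_eq_prime_power:
  assumes "prime p" and "card (UNIV :: 'a::{field,finite} set) = p ^ r"
  shows "CHAR('a) = p"
proof -
  have "prime CHAR('a)"
    by (simp add: finite_imp_CHAR_pos prime_CHAR_semidom)
  moreover have "CHAR('a) dvd p ^ r"
    using CHAR_dvd_CARD[where 'a = 'a] assms(2) by simp
  ultimately have "CHAR('a) dvd p"
    using prime_dvd_power by blast
  with \<open>prime CHAR('a)\<close> assms(1) show ?thesis
    by (simp add: primes_dvd_imp_eq)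
qed

theorem mainTheorem9:
  fixes p r s n :: nat and f F :: "'a::{field,finite} poly"
  assumes "prime p" and "card (UNIV :: 'a set) = p ^ r" and "1 \<le> s" and "s \<le> r - 1"
    and "degree F = n" and "lead_coeff F = 1"
    and "\<exists>h. F = skew_mult (\<lambda>a. a ^ (p ^ s)) h f"
    and "skew_code (\<lambda>a. a ^ (p ^ s)) f n \<noteq> {0}"
  shows "min_dist (lin_code (p ^ s) f n) \<le> min_dist (skew_code (\<lambda>a. a ^ (p ^ s)) f n)
    \<and> (min_dist (lin_code (p ^ s) f n) = min_dist (skew_code (\<lambda>a. a ^ (p ^ s)) f n)
       \<longleftrightarrow> (\<exists>v\<in>lin_code (p ^ s) f n. v \<noteq> 0 \<and> weight v = min_dist (lin_code (p ^ s) f n)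
              \<and> v \<in> lin_polys (p ^ s)))"
proof -
  let ?Q = "p ^ s" and ?S = "skew_code (\<lambda>a. a ^ (p ^ s)) f n" and ?C = "lin_code (p ^ s) f n"
  have CHAR: "prime CHAR('a)" "?Q = CHAR('a) ^ s"
    using CHAR_eq_of_card_eq_prime_power[OF assms(1,2)] assms(1) by simp_all
  have "p ^ 1 \<le> ?Q"
    using assms(1,3) prime_ge_1_nat by (intro power_increasing) simp_all
  then have Q: "?Q \<ge> 2"
    using prime_ge_2_nat[OF assms(1)] by simp
  have image: "lin_poly ?Q ` ?S = ?C \<inter> lin_polys ?Q"
    by (rule lin_poly_image_skew_code[OF Q CHAR])
  have "0 \<in> ?S"
    by (auto simp: skew_code_def deg_less_def intro!: exI[of _ 0])
  then have "lin_poly ?Q ` ?S - {0} \<noteq> {}"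
    using assms(8) Q by (auto simp: lin_poly_eq_0_iff)
  moreover have "finite (weight ` (?C - {0}))"
    by (rule finite_weight_image_of_deg_less) (auto simp: lin_code_def)
  moreover have "lin_poly ?Q ` ?S \<subseteq> ?C"
    unfolding image by blast
  ultimately have "min_dist ?C \<le> min_dist (lin_poly ?Q ` ?S) \<and>
      (min_dist ?C = min_dist (lin_poly ?Q ` ?S) \<longleftrightarrow>
        (\<exists>v\<in>?C. v \<noteq> 0 \<and> weight v = min_dist ?C \<and> v \<in> lin_poly ?Q ` ?S))"
    by (intro min_dist_subcode)
  moreover have "min_dist (lin_poly ?Q ` ?S) = min_dist ?S"
    by (rule min_dist_lin_poly_image[OF Q])
  ultimately show ?thesis
    unfolding image by auto
qed

end
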